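(* Let $X$ be a real linear metric space and let $f:X\to\mathbb{R}$ be a sublinear function. Then $f$ is bounded above on some shift-compact set in $X$ if and only if $f$ is continuous.
   Context: A real linear metric space is a real topological vector space whose topology is given by an invariant metric. A function $f:X\to\mathbb{R}$ is sublinear if $f(x+y)\le f(x)+f(y)$ for all $x,y\in X$ and $f(nx)=nf(x)$ for all $x\in X$, $n\in\mathbb{N}$. A set $A\subset X$ is shift-compact if for every sequence $(x_n)$ tending to $0$ in $X$ there exists $x\in X$ such that $\{n\in\mathbb{N}: x+x_n\in A\}$ is infinite. *)

theory Defs
  imports "HOL-Analysis.Analysis"
begin

text \<open>A real linear metric space: a real vector space with a metric that is
translation invariant and whose topology makes the vector operations continuous
(addition is automatically continuous for an invariant metric; we require it anyway).\<close>
definition linear_metric_space :: "'a::{real_vector,metric_space} itself \<Rightarrow> bool" where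
  "linear_metric_space _ \<longleftrightarrow>
     (\<forall>x y z::'a. dist (x + z) (y + z) = dist x y) \<and>
     continuous_on UNIV (\<lambda>p::'a \<times> 'a. fst p + snd p) \<and>
     continuous_on UNIV (\<lambda>p::real \<times> 'a. fst p *\<^sub>R snd p)"

definition sublinear :: "('a::real_vector \<Rightarrow> real) \<Rightarrow> bool" where
  "sublinear f \<longleftrightarrow>
     (\<forall>x y. f (x + y) \<le> f x + f y) \<and> (\<forall>x. \<forall>n::nat. f (real n *\<^sub>R x) = real n * f x)"

definition shift_compact :: "'a::{real_vector,metric_space} set \<Rightarrow> bool" where
  "shift_compact A \<longleftrightarrow>
     (\<forall>s::nat \<Rightarrow> 'a. s \<longlonglongrightarrow> 0 \<longrightarrow> (\<exists>x. infinite {n. x + s n \<in> A}))"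

end

theory Submission
  imports Defs
begin

text \<open>If \<open>f\<close> is bounded above by \<open>M\<close> on a shift-compact set \<open>A\<close>, it is bounded above near \<open>0\<close>:
otherwise pick \<open>h\<^sub>n \<rightarrow> 0\<close> with \<open>f h\<^sub>n > n\<close>; some translate \<open>x + h\<^sub>n\<close> lies in \<open>A\<close> for infinitely many
\<open>n\<close>, and there subadditivity gives \<open>f h\<^sub>n \<le> f (x + h\<^sub>n) + f (-x) \<le> M + f (-x)\<close>.
Positive homogeneity shrinks the bound: \<open>f h \<le> K/m\<close> for \<open>h\<close> near \<open>0\<close> as \<open>m h\<close> is near \<open>0\<close>.
Together with \<open>-f (-h) \<le> f h\<close> this gives \<open>f h \<rightarrow> 0\<close> as \<open>h \<rightarrow> 0\<close>, and continuity everywhere follows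
from \<open>-f (x - y) \<le> f y - f x \<le> f (y - x)\<close>. Conversely, for continuous \<open>f\<close> the neighbourhood
\<open>{x. f x < 1}\<close> of \<open>0\<close> is shift-compact.\<close>

lemma linear_metric_space_dist_diff_0:
  fixes x y :: "'a::{real_vector,metric_space}"
  assumes "linear_metric_space TYPE('a)"
  shows "dist (x - y) 0 = dist x y"
  using assms unfolding linear_metric_space_def
  by (metis add_0 diff_add_cancel)

lemma linear_metric_space_tendsto_diff:
  fixes x :: "'a::{real_vector,metric_space}"
  assumes "linear_metric_space TYPE('a)"
  shows "((\<lambda>y. y - x) \<longlongrightarrow> 0) (nhds x)" and "((\<lambda>y. x - y) \<longlongrightarrow> 0) (nhds x)"
  using linear_metric_space_dist_diff_0[OF assms]
  by (auto simp: tendsto_iff eventually_nhds_metric dist_commute)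

lemma linear_metric_space_tendsto_scaleR_0:
  fixes c :: real
  assumes "linear_metric_space TYPE('a::{real_vector,metric_space})"
  shows "((\<lambda>x::'a. c *\<^sub>R x) \<longlongrightarrow> 0) (nhds 0)"
proof -
  have "continuous_on UNIV (\<lambda>p::real \<times> 'a. fst p *\<^sub>R snd p)"
    using assms unfolding linear_metric_space_def by blast
  then have "continuous_on UNIV (\<lambda>x::'a. fst (c, x) *\<^sub>R snd (c, x))"
    by (rule continuous_on_compose2) (auto intro: continuous_on_Pair continuous_on_const continuous_on_id)
  then have "isCont (\<lambda>x::'a. c *\<^sub>R x) 0"
    by (simp add: continuous_on_eq_continuous_at)
  then show ?thesis
    using tendsto_at_iff_tendsto_nhds[of "\<lambda>x::'a. c *\<^sub>R x" 0] by (simp add: isCont_def)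
qed

lemma sublinear_zero:
  assumes "sublinear f"
  shows "f 0 = 0"
proof -
  have "f (real 0 *\<^sub>R 0) = real 0 * f 0"
    using assms unfolding sublinear_def by blast
  then show ?thesis
    by simp
qed

lemma sublinear_diff_le:
  assumes "sublinear f"
  shows "f x - f y \<le> f (x - y)"
proof -
  have "f ((x - y) + y) \<le> f (x - y) + f y"
    using assms unfolding sublinear_def by blast
  then show ?thesis
    by simp
qed

lemma shift_compact_open_0:
  fixes U :: "'a::{real_vector,metric_space} set"
  assumes "open U" and "0 \<in> U"
  shows "shift_compact U"
  unfolding shift_compact_def
proof (intro allI impI exI)
  fix s :: "nat \<Rightarrow> 'a"
  assume "s \<longlonglongrightarrow> 0"
  then have "eventually (\<lambda>n. 0 + s n \<in> U) sequentially"
    using assms by (simp add: topological_tendstoD)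
  then show "infinite {n. 0 + s n \<in> U}"
    using eventually_frequently[OF sequentially_bot]
    by (simp flip: cofinite_eq_sequentially add: frequently_cofinite)
qed

lemma sublinear_bounded_near_0_if_shift_compact:
  fixes f :: "'a::{real_vector,metric_space} \<Rightarrow> real"
  assumes "sublinear f" and "shift_compact A" and "bdd_above (f ` A)"
  shows "\<exists>K. eventually (\<lambda>h. f h \<le> K) (nhds 0)"
proof (rule ccontr)
  obtain M where M: "\<And>a. a \<in> A \<Longrightarrow> f a \<le> M"
    using assms(3) by (auto simp: bdd_above_def)
  assume unbounded: "\<nexists>K. eventually (\<lambda>h. f h \<le> K) (nhds 0)"
  have "\<forall>n. \<exists>h. dist h 0 < inverse (real (Suc n)) \<and> real n < f h"
  proof
    fix n
    have "\<not> eventually (\<lambda>h. f h \<le> real n) (nhds 0)"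
      using unbounded by blast
    then show "\<exists>h. dist h 0 < inverse (real (Suc n)) \<and> real n < f h"
      unfolding eventually_nhds_metric by (auto simp: not_le)
  qed
  then obtain h where "\<forall>n. dist (h n) 0 < inverse (real (Suc n)) \<and> real n < f (h n)"
    by (rule choice[THEN exE])
  then have h: "\<And>n. dist (h n) 0 < inverse (real (Suc n))" "\<And>n. real n < f (h n)"
    by auto
  have "dist (h n) 0 \<le> inverse (real (Suc n))" for n
    by (rule less_imp_le[OF h(1)])
  then have "(\<lambda>n. dist (h n) 0) \<longlonglongrightarrow> 0"
    by (intro tendsto_sandwich[OF _ _ tendsto_const LIMSEQ_inverse_real_of_nat]) simp_all
  then have "h \<longlonglongrightarrow> 0"
    by (rule tendsto_dist_iff[THEN iffD2])
  then obtain x where "infinite {n. x + h n \<in> A}"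
    using assms(2) unfolding shift_compact_def by blast
  then have "\<exists>n > nat \<lceil>M + f (- x)\<rceil>. x + h n \<in> A"
    unfolding infinite_nat_iff_unbounded by simp
  then obtain n where n: "nat \<lceil>M + f (- x)\<rceil> < n" "x + h n \<in> A"
    by blast
  have "f (h n) = f ((x + h n) + - x)"
    by simp
  also have "\<dots> \<le> f (x + h n) + f (- x)"
    using assms(1) unfolding sublinear_def by blast
  also have "\<dots> \<le> M + f (- x)"
    using M[OF n(2)] by simp
  finally show False
    using h(2)[of n] n(1) by linarith
qed

lemma sublinear_eventually_less_if_bounded_near_0:
  fixes f :: "'a::{real_vector,metric_space} \<Rightarrow> real"
  assumes "linear_metric_space TYPE('a)" and "sublinear f"
    and bounded: "eventually (\<lambda>h. f h \<le> K) (nhds 0)" and "e > 0"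
  shows "eventually (\<lambda>h. f h < e) (nhds 0)"
proof -
  obtain n where "K < real n * e"
    using reals_Archimedean3[OF \<open>e > 0\<close>] by blast
  then have K: "K < real (Suc n) * e"
    using \<open>e > 0\<close> by (simp add: distrib_right)
  have "eventually (\<lambda>h. f (real (Suc n) *\<^sub>R h) \<le> K) (nhds 0)"
    using filterlim_iff[THEN iffD1, OF linear_metric_space_tendsto_scaleR_0[OF assms(1)]] bounded
    by blast
  then show ?thesis
  proof (rule eventually_mono)
    fix h
    assume "f (real (Suc n) *\<^sub>R h) \<le> K"
    then have "real (Suc n) * f h < real (Suc n) * e"
      using assms(2) K unfolding sublinear_def by (metis order_le_less_trans)
    then show "f h < e"
      by (simp only: mult_less_cancel_left_pos of_nat_0_less_iff zero_less_Suc)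
  qed
qed

lemma sublinear_tendsto_0_if_bounded_near_0:
  fixes f :: "'a::{real_vector,metric_space} \<Rightarrow> real"
  assumes "linear_metric_space TYPE('a)" and "sublinear f"
    and "eventually (\<lambda>h. f h \<le> K) (nhds 0)"
  shows "(f \<longlongrightarrow> 0) (nhds 0)"
proof (rule order_tendstoI)
  fix e :: real
  assume "0 < e"
  then show "eventually (\<lambda>h. f h < e) (nhds 0)"
    by (rule sublinear_eventually_less_if_bounded_near_0[OF assms])
next
  fix a :: real
  assume "a < 0"
  then have "eventually (\<lambda>h. f h < - a) (nhds (0::'a))"
    using sublinear_eventually_less_if_bounded_near_0[OF assms] by simp
  then have "eventually (\<lambda>h. f (0 - h) < - a) (nhds (0::'a))"
    using filterlim_iff[THEN iffD1, OF linear_metric_space_tendsto_diff(2)[OF assms(1)]] by blast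
  then show "eventually (\<lambda>h. a < f h) (nhds 0)"
  proof (rule eventually_mono)
    fix h
    assume "f (0 - h) < - a"
    moreover have "- f h \<le> f (0 - h)"
      using sublinear_diff_le[OF assms(2), of 0 h] by (simp add: sublinear_zero[OF assms(2)])
    ultimately show "a < f h"
      by linarith
  qed
qed

lemma sublinear_continuous_if_tendsto_0:
  fixes f :: "'a::{real_vector,metric_space} \<Rightarrow> real"
  assumes "linear_metric_space TYPE('a)" and "sublinear f" and "(f \<longlongrightarrow> 0) (nhds 0)"
  shows "continuous_on UNIV f"
proof (rule continuous_at_imp_continuous_on, rule ballI)
  fix x
  have lower: "((\<lambda>y. - f (x - y)) \<longlongrightarrow> 0) (nhds x)"
    using tendsto_minus[OF filterlim_compose[OF assms(3) linear_metric_space_tendsto_diff(2)[OF assms(1)]]]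
    by simp
  have upper: "((\<lambda>y. f (y - x)) \<longlongrightarrow> 0) (nhds x)"
    using filterlim_compose[OF assms(3) linear_metric_space_tendsto_diff(1)[OF assms(1)]] .
  have "- f (x - y) \<le> f y - f x" "f y - f x \<le> f (y - x)" for y
    using sublinear_diff_le[OF assms(2), of x y] sublinear_diff_le[OF assms(2), of y x] by linarith+
  then have "((\<lambda>y. f y - f x) \<longlongrightarrow> 0) (nhds x)"
    by (intro tendsto_sandwich[OF _ _ lower upper]) simp_all
  then have "(f \<longlongrightarrow> f x) (nhds x)"
    by (rule Lim_null[THEN iffD2])
  then show "isCont f x"
    by (simp add: isCont_def tendsto_at_iff_tendsto_nhds)
qed

theorem corollary1p10:
  fixes f :: "'a::{real_vector,metric_space} \<Rightarrow> real"
  assumes "linear_metric_space TYPE('a)"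
    and "sublinear f"
  shows "(\<exists>A. shift_compact A \<and> bdd_above (f ` A)) \<longleftrightarrow> continuous_on UNIV f"
proof
  assume "\<exists>A. shift_compact A \<and> bdd_above (f ` A)"
  then obtain K where "eventually (\<lambda>h. f h \<le> K) (nhds 0)"
    using sublinear_bounded_near_0_if_shift_compact[OF assms(2)] by blast
  then show "continuous_on UNIV f"
    using assms sublinear_tendsto_0_if_bounded_near_0 sublinear_continuous_if_tendsto_0 by blast
next
  assume "continuous_on UNIV f"
  then have "open (f -` {..<1})"
    by (simp add: open_vimage)
  moreover have "0 \<in> f -` {..<1}"
    by (simp add: sublinear_zero[OF assms(2)])
  ultimately have "shift_compact (f -` {..<1})"
    by (rule shift_compact_open_0)
  moreover have "bdd_above (f ` (f -` {..<1}))"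
    by (rule bdd_aboveI[where M = 1]) auto
  ultimately show "\<exists>A. shift_compact A \<and> bdd_above (f ` A)"
    by blast
qed

end
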